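(* Let $A\in\mathbb{R}^{n\times n}$, $t\ge0$, and $\Omega=c+G\mathbf{B}_p$ with $c\in\mathbb{R}^n$, $G\in\mathbb{R}^{n\times p}$, $\mathrm{rank}(G)=n$. Then for every $k\in\mathbb{N}$ with $\lambda(t,\Omega,k)\ge0$, $$\mathcal{T}(t,k)\bigl(c+\lambda(t,\Omega,k)G\mathbf{B}_p\bigr)\subseteq\int_0^t\mathrm{e}^{sA}\Omega\,\mathrm{d}s.$$
   Context: A norm $\|\cdot\|$ is fixed on each $\mathbb{R}^k$, $\mathbf{B}_k$ is its closed unit ball, and matrices carry induced operator norms; $G^\dagger$ is the Moore–Penrose inverse. $\mathcal{T}(t,k)=\sum_{j=0}^{k-1}t^{j+1}A^j/(j+1)!$. $\theta(r,k)=\sum_{j=k}^\infty r^j/j!$. $\lambda(t,\Omega,k)=\dfrac{1-\mathrm{e}^{t\|A\|}\theta(t\|A\|,k)\|G^\dagger\|\|c\|}{1+\mathrm{e}^{t\|A\|}\theta(t\|A\|,k)\|G^\dagger\|\|G\|}$. Set-valued integral: $\int_0^tF(s)W\,\mathrm{d}s=\bigcup_w\int_0^tF(s)w(s)\,\mathrm{d}s$ over all Lebesgue measurable $w:[0,t]\to W$. *)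

theory Defs
  imports "HOL-Analysis.Analysis"
begin

definition is_norm :: "('a::real_vector \<Rightarrow> real) \<Rightarrow> bool" where
  "is_norm N \<longleftrightarrow> (\<forall>x. N x = 0 \<longleftrightarrow> x = 0) \<and> (\<forall>x y. N (x + y) \<le> N x + N y)
     \<and> (\<forall>a x. N (a *\<^sub>R x) = \<bar>a\<bar> * N x)"

definition op_norm :: "(real^'m \<Rightarrow> real) \<Rightarrow> (real^'n \<Rightarrow> real) \<Rightarrow> real^'m^'n \<Rightarrow> real" where
  "op_norm N1 N2 M = Sup {N2 (M *v x) | x. N1 x \<le> 1}"

definition unit_ball :: "('a \<Rightarrow> real) \<Rightarrow> 'a set" where
  "unit_ball N = {x. N x \<le> 1}"

definition moore_penrose :: "real^'p^'n \<Rightarrow> real^'n^'p \<Rightarrow> bool" where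
  "moore_penrose G X \<longleftrightarrow> G ** X ** G = G \<and> X ** G ** X = X
     \<and> transpose (G ** X) = G ** X \<and> transpose (X ** G) = X ** G"

definition pinv :: "real^'p^'n \<Rightarrow> real^'n^'p" where
  "pinv G = (THE X. moore_penrose G X)"

primrec matpow :: "real^'n^'n \<Rightarrow> nat \<Rightarrow> real^'n^'n" where
  "matpow A 0 = mat 1"
| "matpow A (Suc j) = A ** matpow A j"

definition mat_exp :: "real^'n^'n \<Rightarrow> real^'n^'n" where
  "mat_exp A = (\<Sum>j. (1 / fact j) *\<^sub>R matpow A j)"

definition T_mat :: "real^'n^'n \<Rightarrow> real \<Rightarrow> nat \<Rightarrow> real^'n^'n" where
  "T_mat A t k = (\<Sum>j<k. (t ^ (j + 1) / fact (j + 1)) *\<^sub>R matpow A j)"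

definition theta :: "real \<Rightarrow> nat \<Rightarrow> real" where
  "theta r k = (\<Sum>j. r ^ (j + k) / fact (j + k))"

definition lam :: "(real^'n \<Rightarrow> real) \<Rightarrow> (real^'p \<Rightarrow> real) \<Rightarrow> real^'n^'n \<Rightarrow> real
    \<Rightarrow> real^'n \<Rightarrow> real^'p^'n \<Rightarrow> nat \<Rightarrow> real" where
  "lam nn np A t c G k =
    (let r = t * op_norm nn nn A;
         q = exp r * theta r k * op_norm nn np (pinv G)
     in (1 - q * nn c) / (1 + q * op_norm np nn G))"

definition set_integral_exp :: "real^'n^'n \<Rightarrow> real \<Rightarrow> (real^'n) set \<Rightarrow> (real^'n) set" where
  "set_integral_exp A t W =
    {integral {0..t} (\<lambda>s. mat_exp (s *\<^sub>R A) *v w s) | w.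
       w \<in> borel_measurable (lebesgue_on {0..t}) \<and> (\<forall>s\<in>{0..t}. w s \<in> W)}"

end

theory Submission
  imports Defs
begin

text \<open>For \<open>x = c + \<lambda> G b\<close> choose the selection \<open>w(s) = x - ((t - s)^k / k!) A^k x\<close>.
  Integrating the exponential series termwise with the beta integral
  \<open>\<integral>\<^sub>0\<^sup>t s^j (t - s)^k ds = j! k! t^(j+k+1) / (j+k+1)!\<close>, the contributions of \<open>A^j x\<close> and
  \<open>A^(j+k) x\<close> telescope and leave \<open>\<integral>\<^sub>0\<^sup>t e^(sA) w(s) ds = T(t,k) x\<close>. Since \<open>G\<close> has full rank,
  \<open>G G\<^sup>\<dagger> = I\<close> and \<open>w(s) = c + G (\<lambda> b - \<beta> G\<^sup>\<dagger> A^k x)\<close> with \<open>\<beta> = (t - s)^k / k!\<close>;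
  as \<open>\<beta> \<parallel>A\<parallel>^k \<le> (t\<parallel>A\<parallel>)^k / k! \<le> \<theta>(t\<parallel>A\<parallel>, k)\<close>, the definition of \<open>\<lambda>\<close> makes the
  coefficient vector lie in the unit ball, so \<open>w(s) \<in> \<Omega>\<close>.\<close>

section \<open>Norms given as functions\<close>

lemma is_norm_zero: "is_norm N \<Longrightarrow> N 0 = 0"
  unfolding is_norm_def by auto

lemma is_norm_scaleR: "is_norm N \<Longrightarrow> N (a *\<^sub>R x) = \<bar>a\<bar> * N x"
  unfolding is_norm_def by auto

lemma is_norm_triangle: "is_norm N \<Longrightarrow> N (x + y) \<le> N x + N y"
  unfolding is_norm_def by auto

lemma is_norm_minus: "is_norm N \<Longrightarrow> N (- x) = N x"
  using is_norm_scaleR[of N "-1" x] by simp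

lemma is_norm_nonneg: "is_norm N \<Longrightarrow> N x \<ge> 0"
  using is_norm_triangle[of N x "-x"] is_norm_zero[of N] is_norm_minus[of N x] by simp

lemma is_norm_pos: "is_norm N \<Longrightarrow> x \<noteq> 0 \<Longrightarrow> N x > 0"
  using is_norm_nonneg[of N x] unfolding is_norm_def by (metis order_le_less)

lemma is_norm_diff_le: "is_norm N \<Longrightarrow> N (x - y) \<le> N x + N y"
  using is_norm_triangle[of N x "-y"] is_norm_minus[of N y] by simp

lemma is_norm_sum_le:
  assumes "is_norm N"
  shows "N (\<Sum>i\<in>S. f i) \<le> (\<Sum>i\<in>S. N (f i))"
proof (induction S rule: infinite_finite_induct)
  case (insert i S)
  then show ?case
    using is_norm_triangle[OF assms, of "f i" "sum f S"] by simp
qed (simp_all add: is_norm_zero[OF assms])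

lemma is_norm_norm: "is_norm norm"
  unfolding is_norm_def by (simp add: norm_triangle_ineq)

lemma is_norm_le_norm:
  fixes N :: "real^'n \<Rightarrow> real"
  assumes "is_norm N"
  obtains C where "C > 0" "\<And>x. N x \<le> C * norm x"
proof
  define C where "C = 1 + (\<Sum>i\<in>UNIV. N (axis i 1))"
  show "C > 0"
    unfolding C_def using is_norm_nonneg[OF assms] by (simp add: add_pos_nonneg sum_nonneg)
  fix x :: "real^'n"
  have "N x = N (\<Sum>i\<in>UNIV. x $ i *\<^sub>R axis i 1)"
    using basis_expansion[of x] by (simp add: scalar_mult_eq_scaleR)
  also have "\<dots> \<le> (\<Sum>i\<in>UNIV. \<bar>x $ i\<bar> * N (axis i 1))"
    by (rule order_trans[OF is_norm_sum_le[OF assms]]) (simp add: is_norm_scaleR[OF assms])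
  also have "\<dots> \<le> (\<Sum>i\<in>UNIV. norm x * N (axis i 1))"
    by (intro sum_mono mult_right_mono is_norm_nonneg[OF assms] component_le_norm_cart)
  also have "\<dots> \<le> C * norm x"
    unfolding C_def by (simp add: sum_distrib_left algebra_simps)
  finally show "N x \<le> C * norm x" .
qed

lemma is_norm_continuous_on:
  fixes N :: "real^'n \<Rightarrow> real"
  assumes "is_norm N"
  shows "continuous_on S N"
proof -
  obtain C where C: "C > 0" "\<And>x. N x \<le> C * norm x"
    using is_norm_le_norm[OF assms] by blast
  have "dist (N x) (N y) \<le> C * dist x y" for x y
    using is_norm_diff_le[OF assms, of x "x - y"] is_norm_diff_le[OF assms, of y "y - x"]
      is_norm_minus[OF assms, of "x - y"] C(2)[of "x - y"]
    by (simp add: dist_real_def dist_norm)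
  then have "C-lipschitz_on S N"
    using C(1) by (intro lipschitz_onI) auto
  then show ?thesis
    by (rule lipschitz_on_continuous_on)
qed

text \<open>The lower bound comes from the minimum of N on the compact Euclidean unit sphere.\<close>
lemma norm_le_is_norm:
  fixes N :: "real^'n \<Rightarrow> real"
  assumes "is_norm N"
  obtains D where "D > 0" "\<And>x. norm x \<le> D * N x"
proof -
  obtain i :: 'n where True by blast
  have "axis i (1::real) \<in> sphere 0 1" by simp
  then obtain x0 where x0: "x0 \<in> sphere (0::real^'n) 1" "\<And>y. y \<in> sphere 0 1 \<Longrightarrow> N x0 \<le> N y"
    using continuous_attains_inf[OF compact_sphere _ is_norm_continuous_on[OF assms]] by blast
  have m: "N x0 > 0"
    using x0(1) is_norm_pos[OF assms, of x0] by fastforce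
  have "norm x \<le> (1 / N x0) * N x" for x
  proof (cases "x = 0")
    case False
    then have "N x0 \<le> N ((1 / norm x) *\<^sub>R x)"
      by (intro x0(2)) simp
    also have "\<dots> = N x / norm x"
      using is_norm_scaleR[OF assms] by simp
    finally show ?thesis
      using False m by (simp add: field_simps)
  qed (simp add: is_norm_zero[OF assms])
  with m show ?thesis
    by (intro that[of "1 / N x0"]) auto
qed

lemma bdd_above_op_norm_set:
  fixes N1 :: "real^'m \<Rightarrow> real" and N2 :: "real^'n \<Rightarrow> real" and M :: "real^'m^'n"
  assumes "is_norm N1" and "is_norm N2"
  shows "bdd_above {N2 (M *v x) | x. N1 x \<le> 1}"
proof -
  obtain C where C: "C > 0" "\<And>y. N2 y \<le> C * norm y"
    using is_norm_le_norm[OF assms(2)] by blast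
  obtain D where D: "D > 0" "\<And>y. norm y \<le> D * N1 y"
    using norm_le_is_norm[OF assms(1)] by blast
  define K where "K = onorm ((*v) M)"
  have K: "K \<ge> 0" "norm (M *v y) \<le> K * norm y" for y
    unfolding K_def using onorm_pos_le onorm matrix_vector_mul_bounded_linear by blast+
  have "N2 (M *v y) \<le> C * (K * D)" if "N1 y \<le> 1" for y
  proof -
    have "N2 (M *v y) \<le> C * (K * norm y)"
      using C K(2)[of y] by (meson mult_left_mono order_trans less_imp_le)
    also have "\<dots> \<le> C * (K * (D * N1 y))"
      using C(1) K(1) D(2)[of y] by (simp add: mult_left_mono)
    also have "\<dots> \<le> C * (K * D)"
      using C(1) K(1) D(1) that by (simp add: mult_left_mono)
    finally show ?thesis .
  qed
  then show ?thesis
    by (intro bdd_aboveI[of _ "C * (K * D)"]) blast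
qed

lemma op_norm_nonneg:
  assumes "is_norm N1" and "is_norm N2"
  shows "op_norm N1 N2 M \<ge> 0"
proof -
  have "0 \<in> {N2 (M *v x) | x. N1 x \<le> 1}"
    using is_norm_zero[OF assms(1)] is_norm_zero[OF assms(2)] by (auto intro!: exI[of _ 0])
  then show ?thesis
    unfolding op_norm_def by (rule cSup_upper[OF _ bdd_above_op_norm_set[OF assms]])
qed

lemma matrix_vector_le_op_norm:
  assumes "is_norm N1" and "is_norm N2"
  shows "N2 (M *v x) \<le> op_norm N1 N2 M * N1 x"
proof (cases "x = 0")
  case True
  then show ?thesis using is_norm_zero[OF assms(1)] is_norm_zero[OF assms(2)] by simp
next
  case False
  define u where "u = (1 / N1 x) *\<^sub>R x"
  have p: "N1 x > 0" using is_norm_pos[OF assms(1) False] .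
  then have "N1 u = 1"
    unfolding u_def using is_norm_scaleR[OF assms(1)] by simp
  then have "N2 (M *v u) \<le> op_norm N1 N2 M"
    unfolding op_norm_def by (intro cSup_upper[OF _ bdd_above_op_norm_set[OF assms]]) auto
  moreover have "N2 (M *v u) = N2 (M *v x) / N1 x"
    unfolding u_def using is_norm_scaleR[OF assms(2)] p by (simp add: matrix_vector_mult_scaleR)
  ultimately show ?thesis
    using p by (simp add: field_simps)
qed

lemma matpow_le_op_norm_power:
  assumes "is_norm N"
  shows "N (matpow A j *v v) \<le> op_norm N N A ^ j * N v"
proof (induction j)
  case (Suc j)
  have "N (matpow A (Suc j) *v v) \<le> op_norm N N A * N (matpow A j *v v)"
    using matrix_vector_le_op_norm[OF assms assms] by (simp flip: matrix_vector_mul_assoc)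
  also have "\<dots> \<le> op_norm N N A * (op_norm N N A ^ j * N v)"
    using Suc op_norm_nonneg[OF assms assms] by (simp add: mult_left_mono)
  finally show ?case by simp
qed simp

section \<open>The Moore--Penrose inverse of a surjective matrix\<close>

lemma moore_penrose_unique:
  fixes G :: "real^'p^'n"
  assumes X: "moore_penrose G X" and Y: "moore_penrose G Y"
  shows "X = Y"
proof -
  note T = matrix_transpose_mul
  have X1: "G ** X ** G = G" "X ** G ** X = X" "transpose (G ** X) = G ** X" "transpose (X ** G) = X ** G"
    using X unfolding moore_penrose_def by auto
  have Y1: "G ** Y ** G = G" "Y ** G ** Y = Y" "transpose (G ** Y) = G ** Y" "transpose (Y ** G) = Y ** G"
    using Y unfolding moore_penrose_def by auto
  have GY: "transpose G = transpose G ** (G ** Y)"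
    by (metis T Y1(1) Y1(3))
  have XG: "transpose G = (X ** G) ** transpose G"
    by (metis T X1(1) X1(4) matrix_mul_assoc)
  have "X = X ** (transpose X ** transpose G)"
    by (metis T X1(2) X1(3) matrix_mul_assoc)
  also have "\<dots> = X ** ((transpose X ** transpose G) ** (G ** Y))"
    by (metis GY matrix_mul_assoc)
  also have "\<dots> = X ** G ** Y"
    by (metis T X1(1) X1(3) matrix_mul_assoc)
  finally have eX: "X = X ** G ** Y" .
  have "Y = ((transpose G ** transpose Y) ** Y)"
    by (metis T Y1(2) Y1(4))
  also have "\<dots> = ((X ** G) ** (transpose G ** transpose Y)) ** Y"
    by (metis XG matrix_mul_assoc)
  also have "\<dots> = X ** G ** Y"
    by (metis T Y1(2) Y1(4) matrix_mul_assoc)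
  finally show ?thesis using eX by simp
qed

text \<open>The witness is \<open>X = G\<^sup>T (G G\<^sup>T)\<^sup>-\<^sup>1\<close>; surjectivity of \<open>G\<close> makes \<open>G G\<^sup>T\<close> invertible.\<close>
lemma moore_penrose_exists:
  fixes G :: "real^'p^'n"
  assumes surj: "surj ((*v) G)"
  obtains X where "moore_penrose G X" "G ** X = mat 1"
proof -
  define S where "S = G ** transpose G"
  have "y = 0" if "S *v y = 0" for y
  proof -
    define u where "u = transpose G *v y"
    have "G *v u = 0"
      using that unfolding u_def S_def by (metis matrix_vector_mul_assoc)
    moreover have "u \<bullet> u = y \<bullet> (G *v u)"
      unfolding u_def by (simp add: dot_lmul_matrix[symmetric] inner_commute)
    ultimately have "u = 0" by simp
    obtain z where "y = G *v z" using surj by (metis surjD)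
    then have "y \<bullet> y = u \<bullet> z"
      unfolding u_def by (metis dot_lmul_matrix inner_commute transpose_matrix_vector)
    then show "y = 0" using \<open>u = 0\<close> by simp
  qed
  then have "inj ((*v) S)"
    by (intro injI) (metis eq_iff_diff_eq_0 matrix_vector_mult_diff_distrib)
  then obtain B where B: "S ** B = mat 1"
    using matrix_left_invertible_injective matrix_left_right_inverse by blast
  have St: "transpose S = S" unfolding S_def by (simp add: matrix_transpose_mul)
  have "transpose B ** S = mat 1"
    using arg_cong[OF B, of transpose] St by (simp add: matrix_transpose_mul)
  then have Bt: "transpose B = B"
    by (metis B matrix_mul_assoc matrix_mul_lid matrix_mul_rid)
  define X where "X = transpose G ** B"
  have GX: "G ** X = mat 1"
    unfolding X_def using B unfolding S_def by (simp add: matrix_mul_assoc)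
  have "moore_penrose G X"
    unfolding moore_penrose_def
  proof (intro conjI)
    show "transpose (X ** G) = X ** G"
      unfolding X_def using Bt by (simp add: matrix_transpose_mul matrix_mul_assoc)
  qed (use GX in \<open>simp_all add: transpose_mat flip: matrix_mul_assoc\<close>)
  then show ?thesis using GX that by blast
qed

lemma pinv_right_inverse:
  fixes G :: "real^'p^'n"
  assumes "rank G = CARD('n)"
  shows "G *v (pinv G *v z) = z"
proof -
  obtain X where "moore_penrose G X" "G ** X = mat 1"
    using moore_penrose_exists assms full_rank_surjective by blast
  moreover have "pinv G = X"
    unfolding pinv_def using calculation(1) moore_penrose_unique by blast
  ultimately show ?thesis
    by (simp add: matrix_vector_mul_assoc)
qed

section \<open>The matrix exponential and its integral over \<open>[0, t]\<close>\<close>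

lemma matpow_add: "matpow A (i + j) = matpow A i ** matpow A j"
  by (induction i) (simp_all add: matrix_mul_assoc)

lemma matpow_scaleR: "matpow (s *\<^sub>R A) j = s ^ j *\<^sub>R matpow A j"
  by (induction j) (simp_all add: scalar_matrix_assoc matrix_scalar_ac mult.commute)

lemma norm_matrix_le:
  fixes M :: "real^'m^'n"
  assumes "\<And>x. norm (M *v x) \<le> B * norm x"
  shows "norm M \<le> real (CARD('n) * CARD('m)) * B"
proof -
  have entry: "\<bar>M $ i $ j\<bar> \<le> B" for i j
    using component_le_norm_cart[of "M *v axis j 1" i] assms[of "axis j 1"]
    by (simp add: matrix_vector_mult_basis column_def)
  have "norm M \<le> (\<Sum>i\<in>UNIV. norm (M $ i))"
    unfolding norm_vec_def by (rule L2_set_le_sum) simp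
  also have "\<dots> \<le> (\<Sum>i\<in>UNIV. \<Sum>j\<in>UNIV. \<bar>M $ i $ j\<bar>)"
    by (intro sum_mono norm_le_l1_cart)
  also have "\<dots> \<le> (\<Sum>i\<in>(UNIV::'n set). \<Sum>j\<in>(UNIV::'m set). B)"
    by (intro sum_mono entry)
  finally show ?thesis by simp
qed

lemma summable_mat_exp_series: "summable (\<lambda>j. (1 / fact j) *\<^sub>R matpow (A::real^'n^'n) j)"
proof (rule summable_comparison_test)
  define C where "C = real (CARD('n) * CARD('n))"
  define K where "K = op_norm norm norm A"
  show "summable (\<lambda>j. C * (inverse (fact j) * K ^ j))"
    by (intro summable_mult summable_exp)
  have "norm (matpow A j) \<le> C * K ^ j" for j
    unfolding C_def K_def
    by (rule norm_matrix_le) (rule matpow_le_op_norm_power[OF is_norm_norm])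
  then show "\<exists>N. \<forall>j\<ge>N. norm ((1 / fact j) *\<^sub>R matpow A j) \<le> C * (inverse (fact j) * K ^ j)"
    by (simp add: divide_simps mult.commute mult.left_commute)
qed

lemma bounded_linear_matrix_vector_mult_left: "bounded_linear (\<lambda>M::real^'n^'m. M *v v)"
proof -
  have "linear (\<lambda>M::real^'n^'m. M *v v)"
    by (rule linearI) (simp_all add: matrix_vector_mult_add_rdistrib scaleR_matrix_vector_assoc)
  then show ?thesis
    using linear_conv_bounded_linear by blast
qed

lemma mat_exp_mult_sums:
  "(\<lambda>j. (s ^ j / fact j) *\<^sub>R (matpow A j *v v)) sums (mat_exp (s *\<^sub>R A) *v v)"
proof -
  have "(\<lambda>j. (1 / fact j) *\<^sub>R matpow (s *\<^sub>R A) j) sums mat_exp (s *\<^sub>R A)"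
    unfolding mat_exp_def by (rule summable_sums[OF summable_mat_exp_series])
  from bounded_linear.sums[OF bounded_linear_matrix_vector_mult_left this, of v]
  show ?thesis
    by (simp add: matpow_scaleR flip: scaleR_matrix_vector_assoc)
qed

lemma has_integral_beta_power:
  fixes t :: real
  assumes "t \<ge> 0"
  shows "((\<lambda>s. s ^ j * (t - s) ^ k / (fact j * fact k)) has_integral t ^ (j + k + 1) / fact (j + k + 1)) {0..t}"
proof (induction k arbitrary: j)
  case 0
  have "((\<lambda>s. s ^ j / fact j) has_integral (t ^ Suc j / fact (Suc j) - 0 ^ Suc j / fact (Suc j))) {0..t}"
  proof (rule fundamental_theorem_of_calculus[OF assms])
    fix s :: real
    have "((\<lambda>s. s ^ Suc j / fact (Suc j)) has_real_derivative Suc j * s ^ j / fact (Suc j)) (at s)"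
      using DERIV_cdivide[OF DERIV_pow[of "Suc j" s], of "fact (Suc j)"] by simp
    moreover have "Suc j * s ^ j / fact (Suc j) = s ^ j / fact j"
      by simp
    ultimately show "((\<lambda>s. s ^ Suc j / fact (Suc j)) has_vector_derivative s ^ j / fact j) (at s within {0..t})"
      by (simp add: has_real_derivative_iff_has_vector_derivative has_vector_derivative_at_within)
  qed
  then show ?case by simp
next
  case (Suc k)
  (* (t - s)^(k+1) = t (t - s)^k - s (t - s)^k reduces (j, k + 1) to (j, k) and (j + 1, k). *)
  have "((\<lambda>s. (t * (s ^ j * (t - s) ^ k / (fact j * fact k))
             - (Suc j) * (s ^ Suc j * (t - s) ^ k / (fact (Suc j) * fact k))) / Suc k)
        has_integral (t * (t ^ (j + k + 1) / fact (j + k + 1))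
             - (Suc j) * (t ^ (Suc j + k + 1) / fact (Suc j + k + 1))) / Suc k) {0..t}"
    by (intro has_integral_divide has_integral_diff has_integral_mult_right Suc.IH)
  moreover have "(t * (s ^ j * (t - s) ^ k / (fact j * fact k))
             - (Suc j) * (s ^ Suc j * (t - s) ^ k / (fact (Suc j) * fact k))) / Suc k
        = s ^ j * (t - s) ^ Suc k / (fact j * fact (Suc k))" for s
  proof -
    have "Suc j * (s ^ Suc j * (t - s) ^ k / (fact (Suc j) * fact k))
        = s * (s ^ j * (t - s) ^ k / (fact j * fact k))"
      by simp
    then show ?thesis
      by (simp add: field_simps)
  qed
  moreover have "(t * (t ^ (j + k + 1) / fact (j + k + 1))
             - (Suc j) * (t ^ (Suc j + k + 1) / fact (Suc j + k + 1))) / Suc k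
        = t ^ (j + Suc k + 1) / fact (j + Suc k + 1)"
  proof -
    define m where "m = j + k + 1"
    have "Suc j + k + 1 = Suc m" "j + Suc k + 1 = Suc m"
      unfolding m_def by simp_all
    moreover have "t * (t ^ m / fact m) = Suc m * (t ^ Suc m / fact (Suc m))"
      by simp
    moreover have "real (Suc m) - Suc j = Suc k"
      unfolding m_def by simp
    ultimately show ?thesis
      unfolding m_def[symmetric] by (simp only: flip: left_diff_distrib) simp
  qed
  ultimately show ?case by simp
qed

lemma sums_exp_power_div_fact: "(\<lambda>j. r ^ j / fact j) sums exp (r::real)"
  using exp_converges[of r] by (simp add: divide_inverse mult.commute)

lemma sum_power_div_fact_le_exp:
  fixes r :: real
  assumes "r \<ge> 0"
  shows "(\<Sum>j<N. r ^ j / fact j) \<le> exp r"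
proof -
  have "(\<Sum>j<N. r ^ j / fact j) \<le> (\<Sum>j. r ^ j / fact j)"
    using assms by (intro sum_le_suminf sums_summable[OF sums_exp_power_div_fact]) auto
  also have "\<dots> = exp r"
    using sums_exp_power_div_fact by (rule sums_unique[symmetric])
  finally show ?thesis .
qed

lemma norm_mat_exp_partial_sum_le:
  fixes A :: "real^'n^'n"
  assumes s: "0 \<le> s" "s \<le> t" and v: "norm v \<le> M"
  shows "norm (\<Sum>j<N. (s ^ j / fact j) *\<^sub>R (matpow A j *v v)) \<le> exp (t * op_norm norm norm A) * M"
proof -
  define K where "K = op_norm norm norm A"
  have K: "K \<ge> 0"
    unfolding K_def by (rule op_norm_nonneg[OF is_norm_norm is_norm_norm])
  have M: "M \<ge> 0"
    using v norm_ge_zero by (rule order_trans[rotated])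
  have "norm (\<Sum>j<N. (s ^ j / fact j) *\<^sub>R (matpow A j *v v))
        \<le> (\<Sum>j<N. (s ^ j / fact j) * norm (matpow A j *v v))"
    using s by (auto intro!: order_trans[OF norm_sum] simp: abs_of_nonneg)
  also have "\<dots> \<le> (\<Sum>j<N. (t * K) ^ j / fact j * M)"
  proof (rule sum_mono)
    fix j
    have "norm (matpow A j *v v) \<le> K ^ j * M"
      using matpow_le_op_norm_power[OF is_norm_norm, of A j v] v K
      unfolding K_def by (meson mult_left_mono order_trans zero_le_power)
    then have "(s ^ j / fact j) * norm (matpow A j *v v) \<le> (s ^ j / fact j) * (K ^ j * M)"
      using s by (intro mult_left_mono) auto
    also have "\<dots> \<le> (t ^ j / fact j) * (K ^ j * M)"
      using s K M by (intro mult_right_mono divide_right_mono power_mono) auto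
    finally show "(s ^ j / fact j) * norm (matpow A j *v v) \<le> (t * K) ^ j / fact j * M"
      by (simp add: power_mult_distrib)
  qed
  also have "\<dots> \<le> exp (t * K) * M"
    unfolding sum_distrib_right[symmetric]
    using sum_power_div_fact_le_exp K s M by (intro mult_right_mono) auto
  finally show ?thesis
    unfolding K_def .
qed

text \<open>Termwise integration is justified by dominated convergence: all partial sums are bounded by
  \<open>e\<^sup>t\<^sup>\<parallel>\<^sup>A\<^sup>\<parallel> M\<close>.\<close>
lemma mat_exp_integral_sums:
  fixes A :: "real^'n^'n" and w :: "real \<Rightarrow> real^'n"
  assumes bound: "\<And>s. s \<in> {0..t} \<Longrightarrow> norm (w s) \<le> M"
    and terms: "\<And>j. ((\<lambda>s. (s ^ j / fact j) *\<^sub>R (matpow A j *v w s)) has_integral I j) {0..t}"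
  shows "I sums integral {0..t} (\<lambda>s. mat_exp (s *\<^sub>R A) *v w s)"
proof -
  define f where "f = (\<lambda>N s. \<Sum>j<N. (s ^ j / fact j) *\<^sub>R (matpow A j *v w s))"
  have int_f: "(f N has_integral (\<Sum>j<N. I j)) {0..t}" for N
    unfolding f_def by (intro has_integral_sum terms) simp
  have dominated: "norm (f N s) \<le> exp (t * op_norm norm norm A) * M" if "s \<in> {0..t}" for N s
    unfolding f_def using that bound by (intro norm_mat_exp_partial_sum_le) auto
  have pointwise: "(\<lambda>N. f N s) \<longlonglongrightarrow> mat_exp (s *\<^sub>R A) *v w s" for s
    using mat_exp_mult_sums[of s A "w s"] unfolding f_def sums_def .
  have "(\<lambda>N. integral {0..t} (f N)) \<longlonglongrightarrow> integral {0..t} (\<lambda>s. mat_exp (s *\<^sub>R A) *v w s)"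
    using int_f by (intro dominated_convergence(2)[OF _ _ dominated pointwise]) blast+
  moreover have "integral {0..t} (f N) = (\<Sum>j<N. I j)" for N
    using int_f by (rule integral_unique)
  ultimately show ?thesis
    unfolding sums_def by simp
qed

lemma telescoping_shift_sums:
  fixes a :: "nat \<Rightarrow> 'a::real_normed_vector"
  assumes "summable a"
  shows "(\<lambda>j. a j - a (j + k)) sums (\<Sum>j<k. a j)"
  using sums_diff[OF summable_sums[OF assms] sums_split_initial_segment[OF summable_sums[OF assms]]]
  by simp

text \<open>The selection \<open>x - ((t - s)^k / k!) A^k x\<close> cancels all terms of order \<open>\<ge> k\<close> in the
  integrated exponential series, leaving \<open>T(t,k) x\<close>.\<close>
lemma integral_mat_exp_remainder_selection:
  fixes A :: "real^'n^'n" and t :: real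
  assumes "t \<ge> 0"
  shows "integral {0..t} (\<lambda>s. mat_exp (s *\<^sub>R A) *v (x - ((t - s) ^ k / fact k) *\<^sub>R (matpow A k *v x)))
         = T_mat A t k *v x"
proof -
  define a where "a = (\<lambda>j. (t ^ (j + 1) / fact (j + 1)) *\<^sub>R (matpow A j *v x))"
  have beta: "((\<lambda>s. (s ^ j * (t - s) ^ i / (fact j * fact i)) *\<^sub>R (matpow A (j + i) *v x))
      has_integral a (j + i)) {0..t}" for i j
    unfolding a_def by (intro has_integral_scaleR_left has_integral_beta_power assms)
  have "a sums integral {0..t} (\<lambda>s. mat_exp (s *\<^sub>R A) *v x)"
    using beta[where i = 0] by (intro mat_exp_integral_sums[of _ _ "norm x"]) auto
  then have "summable a"
    by (rule sums_summable)
  have selection: "(\<lambda>j. a j - a (j + k))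
        sums integral {0..t} (\<lambda>s. mat_exp (s *\<^sub>R A) *v (x - ((t - s) ^ k / fact k) *\<^sub>R (matpow A k *v x)))"
  proof (rule mat_exp_integral_sums[of _ _ "norm x + t ^ k / fact k * norm (matpow A k *v x)"])
    fix s :: real assume "s \<in> {0..t}"
    then have "norm (((t - s) ^ k / fact k) *\<^sub>R (matpow A k *v x)) = (t - s) ^ k / fact k * norm (matpow A k *v x)"
      by simp
    also have "\<dots> \<le> t ^ k / fact k * norm (matpow A k *v x)"
      using \<open>s \<in> {0..t}\<close> by (intro mult_right_mono divide_right_mono power_mono) auto
    finally show "norm (x - ((t - s) ^ k / fact k) *\<^sub>R (matpow A k *v x))
               \<le> norm x + t ^ k / fact k * norm (matpow A k *v x)"
      by (intro order_trans[OF norm_triangle_ineq4] add_left_mono)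
  next
    fix j
    show "((\<lambda>s. (s ^ j / fact j) *\<^sub>R (matpow A j *v (x - ((t - s) ^ k / fact k) *\<^sub>R (matpow A k *v x))))
          has_integral a j - a (j + k)) {0..t}"
      using has_integral_diff[OF beta[where i = 0 and j = j] beta[where i = k and j = j]]
      by (simp add: matrix_vector_mult_diff_distrib matrix_vector_mult_scaleR matrix_vector_mul_assoc
          matpow_add scaleR_right_diff_distrib)
  qed
  have "T_mat A t k *v x = (\<Sum>j<k. a j)"
  proof -
    have "T_mat A t k *v x = (\<Sum>j<k. ((t ^ (j + 1) / fact (j + 1)) *\<^sub>R matpow A j) *v x)"
      unfolding T_mat_def
      using bounded_linear.linear[OF bounded_linear_matrix_vector_mult_left] by (rule linear_sum)
    then show ?thesis
      unfolding a_def by (simp add: scaleR_matrix_vector_assoc)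
  qed
  with sums_unique2[OF selection telescoping_shift_sums[OF \<open>summable a\<close>]] show ?thesis
    by simp
qed

section \<open>The selection stays in the zonotope\<close>

lemma power_div_fact_le_theta:
  assumes "r \<ge> 0"
  shows "r ^ k / fact k \<le> theta r k"
proof -
  have "summable (\<lambda>j. r ^ (j + k) / fact (j + k))"
    by (intro summable_ignore_initial_segment sums_summable[OF sums_exp_power_div_fact])
  then have "(\<Sum>j<1. r ^ (j + k) / fact (j + k)) \<le> theta r k"
    unfolding theta_def using assms by (intro sum_le_suminf) auto
  then show ?thesis by simp
qed

lemma theta_nonneg: "r \<ge> 0 \<Longrightarrow> theta r k \<ge> 0"
  using power_div_fact_le_theta[of r k] by (meson order_trans divide_nonneg_pos fact_gt_zero zero_le_power)

lemma remainder_weight_le_exp_theta: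
  assumes "s \<in> {0..t}" and "a \<ge> 0"
  shows "(t - s) ^ k / fact k * a ^ k \<le> exp (t * a) * theta (t * a) k"
proof -
  have r0: "t * a \<ge> 0"
    using assms by simp
  have "(t - s) ^ k / fact k * a ^ k = ((t - s) * a) ^ k / fact k"
    by (simp add: power_mult_distrib)
  also have "\<dots> \<le> (t * a) ^ k / fact k"
    using assms by (intro divide_right_mono power_mono mult_right_mono) auto
  also have "\<dots> \<le> theta (t * a) k"
    using r0 by (rule power_div_fact_le_theta)
  also have "\<dots> \<le> exp (t * a) * theta (t * a) k"
    using theta_nonneg[OF r0, of k] r0 by (simp add: mult_le_cancel_right1)
  finally show ?thesis .
qed

lemma norm_add_scaleR_mult_le:
  assumes "is_norm N1" and "is_norm N2" and "l \<ge> 0" and "N2 b \<le> 1"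
  shows "N1 (c + l *\<^sub>R (M *v b)) \<le> N1 c + l * op_norm N2 N1 M"
proof -
  have "N1 (c + l *\<^sub>R (M *v b)) \<le> N1 c + l * N1 (M *v b)"
    by (rule order_trans[OF is_norm_triangle[OF assms(1)]]) (simp add: is_norm_scaleR[OF assms(1)] assms(3))
  also have "N1 (M *v b) \<le> op_norm N2 N1 M"
    using matrix_vector_le_op_norm[OF assms(2,1), of M b] assms(4) op_norm_nonneg[OF assms(2,1), of M]
    by (meson mult_left_le order_trans)
  finally show ?thesis
    using assms(3) by (simp add: mult_left_mono)
qed

lemma lam_balance:
  fixes nn :: "real^'n \<Rightarrow> real" and np :: "real^'p \<Rightarrow> real" and G :: "real^'p^'n"
    and A :: "real^'n^'n" and k :: nat
  assumes nn: "is_norm nn" and np: "is_norm np" and "t \<ge> 0"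
  defines "q \<equiv> exp (t * op_norm nn nn A) * theta (t * op_norm nn nn A) k * op_norm nn np (pinv G)"
  shows "lam nn np A t c G k + q * (nn c + lam nn np A t c G k * op_norm np nn G) = 1"
proof -
  have q0: "q \<ge> 0"
    unfolding q_def using theta_nonneg assms(3) op_norm_nonneg[OF nn nn] op_norm_nonneg[OF nn np]
    by simp
  have "1 + q * op_norm np nn G > 0"
    using q0 op_norm_nonneg[OF np nn] by (simp add: add_pos_nonneg)
  moreover have "lam nn np A t c G k = (1 - q * nn c) / (1 + q * op_norm np nn G)"
    unfolding lam_def Let_def q_def ..
  ultimately show ?thesis
    by (simp add: field_simps)
qed

text \<open>Writing the selection as \<open>c + G b'\<close> with \<open>b' = \<lambda> b - \<beta> G\<^sup>\<dagger> A\<^sup>k x\<close>, the norm of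
  \<open>b'\<close> is bounded by the left-hand side of the balance identity.\<close>
lemma remainder_selection_in_zonotope:
  fixes nn :: "real^'n \<Rightarrow> real" and np :: "real^'p \<Rightarrow> real" and G :: "real^'p^'n"
  assumes nn: "is_norm nn" and np: "is_norm np" and rank: "rank G = CARD('n)"
    and lam: "lam nn np A t c G k \<ge> 0" and b: "np b \<le> 1" and s: "s \<in> {0..t}"
  defines "x \<equiv> c + lam nn np A t c G k *\<^sub>R (G *v b)"
  shows "x - ((t - s) ^ k / fact k) *\<^sub>R (matpow A k *v x) \<in> (\<lambda>b. c + G *v b) ` unit_ball np"
proof -
  define l where "l = lam nn np A t c G k"
  define a where "a = op_norm nn nn A"
  define g where "g = op_norm np nn G"
  define h where "h = op_norm nn np (pinv G)"
  define \<beta> where "\<beta> = (t - s) ^ k / fact k"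
  define y where "y = matpow A k *v x"
  have l0: "l \<ge> 0" and \<beta>0: "\<beta> \<ge> 0" and t0: "t \<ge> 0"
    using lam s unfolding l_def \<beta>_def by auto
  have a0: "a \<ge> 0" and h0: "h \<ge> 0"
    unfolding a_def h_def using op_norm_nonneg nn np by blast+
  have nx: "nn x \<le> nn c + l * g"
    unfolding x_def l_def[symmetric] g_def using nn np l0 b by (rule norm_add_scaleR_mult_le)
  define b' where "b' = l *\<^sub>R b - \<beta> *\<^sub>R (pinv G *v y)"
  have "np b' \<le> l * np b + \<beta> * np (pinv G *v y)"
    unfolding b'_def
    by (rule order_trans[OF is_norm_diff_le[OF np]]) (simp add: is_norm_scaleR[OF np] l0 \<beta>0)
  also have "\<dots> \<le> l + h * ((\<beta> * a ^ k) * nn x)"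
  proof (rule add_mono)
    show "l * np b \<le> l"
      using b l0 by (simp add: mult_left_le)
    have "np (pinv G *v y) \<le> h * (a ^ k * nn x)"
      using matrix_vector_le_op_norm[OF nn np, of "pinv G" y] matpow_le_op_norm_power[OF nn, of A k x] h0
      unfolding h_def a_def y_def by (meson mult_left_mono order_trans)
    then have "\<beta> * np (pinv G *v y) \<le> \<beta> * (h * (a ^ k * nn x))"
      using \<beta>0 by (rule mult_left_mono)
    then show "\<beta> * np (pinv G *v y) \<le> h * ((\<beta> * a ^ k) * nn x)"
      by (simp add: ac_simps)
  qed
  also have "\<dots> \<le> l + h * ((exp (t * a) * theta (t * a) k) * (nn c + l * g))"
  proof -
    have "\<beta> * a ^ k \<le> exp (t * a) * theta (t * a) k"
      unfolding \<beta>_def using s a0 by (rule remainder_weight_le_exp_theta)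
    moreover have "exp (t * a) * theta (t * a) k \<ge> 0"
      using theta_nonneg t0 a0 by simp
    ultimately show ?thesis
      using mult_mono[OF _ nx _ is_norm_nonneg[OF nn]] h0 by (intro add_left_mono mult_left_mono) auto
  qed
  also have "\<dots> = 1"
    using lam_balance[OF nn np t0]
    unfolding l_def a_def g_def h_def by (simp add: algebra_simps)
  finally have "b' \<in> unit_ball np"
    unfolding unit_ball_def by simp
  moreover have "c + G *v b' = x - \<beta> *\<^sub>R y"
    unfolding b'_def x_def l_def
    by (simp add: matrix_vector_mult_diff_distrib matrix_vector_mult_scaleR pinv_right_inverse[OF rank])
  ultimately show ?thesis
    unfolding \<beta>_def y_def by (metis image_eqI)
qed

theorem corollary2:
  fixes nn :: "real^'n \<Rightarrow> real" and np :: "real^'p \<Rightarrow> real"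
    and A :: "real^'n^'n" and t :: real and c :: "real^'n" and G :: "real^'p^'n"
    and k :: nat
  assumes "is_norm nn" and "is_norm np"
    and "t \<ge> 0"
    and "rank G = CARD('n)"
    and "lam nn np A t c G k \<ge> 0"
  shows "(\<lambda>x. T_mat A t k *v x) ` ((\<lambda>b. c + lam nn np A t c G k *\<^sub>R (G *v b)) ` unit_ball np)
         \<subseteq> set_integral_exp A t ((\<lambda>b. c + G *v b) ` unit_ball np)"
proof
  fix z
  assume "z \<in> (\<lambda>x. T_mat A t k *v x) ` ((\<lambda>b. c + lam nn np A t c G k *\<^sub>R (G *v b)) ` unit_ball np)"
  then obtain b where b: "np b \<le> 1" and z: "z = T_mat A t k *v (c + lam nn np A t c G k *\<^sub>R (G *v b))"
    unfolding unit_ball_def by auto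
  define x where "x = c + lam nn np A t c G k *\<^sub>R (G *v b)"
  define w where "w = (\<lambda>s. x - ((t - s) ^ k / fact k) *\<^sub>R (matpow A k *v x))"
  have "w \<in> borel_measurable (lebesgue_on {0..t})"
    unfolding w_def by (intro continuous_imp_measurable_on_sets_lebesgue continuous_intros) auto
  moreover have "\<forall>s\<in>{0..t}. w s \<in> (\<lambda>b. c + G *v b) ` unit_ball np"
    unfolding w_def x_def using remainder_selection_in_zonotope[OF assms(1,2,4,5) b] by blast
  moreover have "z = integral {0..t} (\<lambda>s. mat_exp (s *\<^sub>R A) *v w s)"
    unfolding z w_def x_def[symmetric] by (rule integral_mat_exp_remainder_selection[OF assms(3), symmetric])
  ultimately show "z \<in> set_integral_exp A t ((\<lambda>b. c + G *v b) ` unit_ball np)"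
    unfolding set_integral_exp_def by blast
qed

end
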